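(* Let $(E,\rho_\theta)$ be a complete $b_v(\theta)$ metric space and let $S:E\to E$ satisfy $\rho_\theta(Su,Sw)\le\beta\rho_\theta(u,Su)+\gamma\rho_\theta(w,Sw)$ for all $u,w\in E$, where $\beta,\gamma\ge0$ are constants with $\beta+\gamma<1$, and where $\Gamma_1<\frac1{\Gamma_2}$ with $\Gamma_1=\min\{\beta,\gamma\}$ and $\Gamma_2=\max\{\theta(u,Su),\theta(Su,u)\}$ (for all $u\in E$). Then $S$ has a unique fixed point.
   Context: Let $E$ be a nonempty set, $\theta:E\times E\to[1,\infty)$ a function and $v\in\mathbb{N}$. A map $\rho_\theta:E\times E\to[0,\infty)$ is a $b_v(\theta)$ metric (and $(E,\rho_\theta)$ a $b_v(\theta)$ metric space) if for all $u,w\in E$: $\rho_\theta(u,w)=0$ iff $u=w$; $\rho_\theta(u,w)=\rho_\theta(w,u)$; and for all $u,z_1,\dots,z_v,w\in E$ pairwise distinct, $\rho_\theta(u,w)\le\theta(u,w)[\rho_\theta(u,z_1)+\rho_\theta(z_1,z_2)+\dots+\rho_\theta(z_{v-1},z_v)+\rho_\theta(z_v,w)]$. A sequence $\{u_n\}$ converges to $u$ if for every $\varepsilon>0$ there is $n_0$ with $\rho_\theta(u_n,u)<\varepsilon$ for all $n\ge n_0$; it is Cauchy if for every $\varepsilon>0$ there is $n_0$ with $\rho_\theta(u_n,u_{n+p})<\varepsilon$ for all $n\ge n_0$ and $p>0$; the space is complete if every Cauchy sequence converges in $E$. *)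

theory Defs
  imports Main "HOL.Real"
begin

definition path_sum :: "('a \<Rightarrow> 'a \<Rightarrow> real) \<Rightarrow> 'a list \<Rightarrow> real" where
  "path_sum \<rho> p = (\<Sum>i < length p - 1. \<rho> (p ! i) (p ! Suc i))"

definition bv_metric :: "'a set \<Rightarrow> ('a \<Rightarrow> 'a \<Rightarrow> real) \<Rightarrow> nat \<Rightarrow> ('a \<Rightarrow> 'a \<Rightarrow> real) \<Rightarrow> bool" where
  "bv_metric E \<theta> v \<rho> \<longleftrightarrow>
     E \<noteq> {} \<and> v \<ge> 1 \<and>
     (\<forall>u\<in>E. \<forall>w\<in>E. \<theta> u w \<ge> 1) \<and>
     (\<forall>u\<in>E. \<forall>w\<in>E. \<rho> u w \<ge> 0) \<and>
     (\<forall>u\<in>E. \<forall>w\<in>E. \<rho> u w = 0 \<longleftrightarrow> u = w) \<and>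
     (\<forall>u\<in>E. \<forall>w\<in>E. \<rho> u w = \<rho> w u) \<and>
     (\<forall>u\<in>E. \<forall>w\<in>E. \<forall>zs. length zs = v \<longrightarrow> set zs \<subseteq> E \<longrightarrow> distinct (u # zs @ [w]) \<longrightarrow>
         \<rho> u w \<le> \<theta> u w * path_sum \<rho> (u # zs @ [w]))"

definition bv_converges :: "('a \<Rightarrow> 'a \<Rightarrow> real) \<Rightarrow> (nat \<Rightarrow> 'a) \<Rightarrow> 'a \<Rightarrow> bool" where
  "bv_converges \<rho> x u \<longleftrightarrow> (\<forall>\<epsilon>>0. \<exists>n0. \<forall>n\<ge>n0. \<rho> (x n) u < \<epsilon>)"

definition bv_cauchy :: "('a \<Rightarrow> 'a \<Rightarrow> real) \<Rightarrow> (nat \<Rightarrow> 'a) \<Rightarrow> bool" where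
  "bv_cauchy \<rho> x \<longleftrightarrow> (\<forall>\<epsilon>>0. \<exists>n0. \<forall>n\<ge>n0. \<forall>p>0. \<rho> (x n) (x (n + p)) < \<epsilon>)"

definition bv_complete :: "'a set \<Rightarrow> ('a \<Rightarrow> 'a \<Rightarrow> real) \<Rightarrow> bool" where
  "bv_complete E \<rho> \<longleftrightarrow>
     (\<forall>x. (\<forall>n. x n \<in> E) \<longrightarrow> bv_cauchy \<rho> x \<longrightarrow> (\<exists>u\<in>E. bv_converges \<rho> x u))"

end

theory Submission
  imports Defs Complex_Main
begin

(* For a Kannan-type map the consecutive distances of a Picard orbit decay geometrically with
   ratio beta / (1 - gamma), which makes the orbit Cauchy; either the orbit hits a fixed point or
   it is injective. In the injective case the tail of the orbit eventually avoids any two points,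
   so the b_v(theta) inequality may be applied to the path u, x_n, ..., x_(n+v-1), S u and to its
   reverse. Letting n tend to infinity gives rho(u, S u) <= theta(u, S u) gamma rho(u, S u) and
   rho(u, S u) <= theta(S u, u) beta rho(u, S u), which contradicts min(beta, gamma) max(theta) < 1
   unless S u = u. *)

lemma bv_metricD:
  assumes "bv_metric E \<theta> v \<rho>" and "u \<in> E" and "w \<in> E"
  shows bv_metric_theta_ge_1: "1 \<le> \<theta> u w"
    and bv_metric_nonneg: "0 \<le> \<rho> u w"
    and bv_metric_eq_0_iff: "\<rho> u w = 0 \<longleftrightarrow> u = w"
    and bv_metric_sym: "\<rho> u w = \<rho> w u"
  using assms unfolding bv_metric_def by blast+

lemma bv_metric_nonempty: "bv_metric E \<theta> v \<rho> \<Longrightarrow> E \<noteq> {}"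
  by (simp add: bv_metric_def)

lemma bv_metric_pos:
  assumes "bv_metric E \<theta> v \<rho>" and "u \<in> E" and "w \<in> E" and "u \<noteq> w"
  shows "0 < \<rho> u w"
  using bv_metric_nonneg[OF assms(1-3)] bv_metric_eq_0_iff[OF assms(1-3)] assms(4) by linarith

lemma bv_metric_triangle:
  assumes "bv_metric E \<theta> v \<rho>" and "u \<in> E" and "w \<in> E"
    and "length zs = v" and "set zs \<subseteq> E" and "distinct (u # zs @ [w])"
  shows "\<rho> u w \<le> \<theta> u w * path_sum \<rho> (u # zs @ [w])"
  using assms unfolding bv_metric_def by blast

lemma path_sum_Cons_map_snoc:
  "path_sum \<rho> (a # map f [0..<Suc m] @ [b]) =
     \<rho> a (f 0) + (\<Sum>i<m. \<rho> (f i) (f (Suc i))) + \<rho> (f m) b"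
proof -
  define p where "p = a # map f [0..<Suc m] @ [b]"
  have p_Suc: "p ! Suc i = f i" if "i \<le> m" for i
    using that by (simp add: p_def nth_append)
  have "path_sum \<rho> p = (\<Sum>i<Suc (Suc m). \<rho> (p ! i) (p ! Suc i))"
    by (simp add: path_sum_def p_def)
  also have "\<dots> = \<rho> (p ! 0) (p ! 1) + (\<Sum>i<m. \<rho> (p ! Suc i) (p ! Suc (Suc i)))
                    + \<rho> (p ! Suc m) (p ! Suc (Suc m))"
    by (subst sum.lessThan_Suc_shift) simp
  also have "(\<Sum>i<m. \<rho> (p ! Suc i) (p ! Suc (Suc i))) = (\<Sum>i<m. \<rho> (f i) (f (Suc i)))"
    by (intro sum.cong) (auto simp: p_Suc)
  finally show ?thesis
    by (simp add: p_Suc p_def[symmetric]) (simp add: p_def nth_append)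
qed

lemma bv_converges_iff_tendsto:
  assumes "\<And>n. 0 \<le> \<rho> (x n) u"
  shows "bv_converges \<rho> x u \<longleftrightarrow> (\<lambda>n. \<rho> (x n) u) \<longlonglongrightarrow> 0"
  unfolding bv_converges_def LIMSEQ_def dist_real_def using assms by simp

lemma bv_completeD:
  assumes "bv_complete E \<rho>" and "\<And>n. x n \<in> E" and "bv_cauchy \<rho> x"
  shows "\<exists>u\<in>E. bv_converges \<rho> x u"
  using assms unfolding bv_complete_def by blast

lemma bv_cauchyI:
  assumes "\<forall>\<^sub>F n in sequentially. \<forall>m\<ge>n. \<rho> (x n) (x m) \<le> b n" and "b \<longlonglongrightarrow> 0"
  shows "bv_cauchy \<rho> x"
  unfolding bv_cauchy_def
proof (intro allI impI)
  fix \<epsilon> :: real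
  assume "\<epsilon> > 0"
  with assms have "\<forall>\<^sub>F n in sequentially. (\<forall>m\<ge>n. \<rho> (x n) (x m) \<le> b n) \<and> b n < \<epsilon>"
    by (intro eventually_conj order_tendstoD(2)) auto
  then obtain n0 where "\<And>n m. n \<ge> n0 \<Longrightarrow> m \<ge> n \<Longrightarrow> \<rho> (x n) (x m) < \<epsilon>"
    unfolding eventually_sequentially by force
  then show "\<exists>n0. \<forall>n\<ge>n0. \<forall>p>0. \<rho> (x n) (x (n + p)) < \<epsilon>"
    by (meson le_add1)
qed

lemma eventually_inj_seq_ne:
  assumes "inj x"
  shows "\<forall>\<^sub>F n in sequentially. x n \<noteq> a"
proof -
  have "finite (x -` {a})"
    using assms by (intro finite_vimageI) auto
  then show ?thesis
    by (simp add: cofinite_eq_sequentially[symmetric] eventually_cofinite vimage_def)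
qed

lemma bv_metric_triangle_limit:
  assumes \<rho>: "bv_metric E \<theta> v \<rho>" and x: "inj x" "\<And>n. x n \<in> E"
    and ab: "a \<in> E" "b \<in> E" "a \<noteq> b"
    and steps: "(\<lambda>n. \<rho> (x n) (x (Suc n))) \<longlonglongrightarrow> 0"
    and f: "\<forall>\<^sub>F n in sequentially. \<rho> a (x n) \<le> f n" "f \<longlonglongrightarrow> A"
    and g: "\<forall>\<^sub>F n in sequentially. \<rho> (x n) b \<le> g n" "g \<longlonglongrightarrow> B"
  shows "\<rho> a b \<le> \<theta> a b * (A + B)"
proof -
  obtain m where v: "v = Suc m"
    using \<rho> unfolding bv_metric_def by (cases v) auto
  \<comment> \<open>By injectivity the tail points are distinct and eventually avoid a and b,
     so the b_v inequality applies along a, x n, ..., x (n + v - 1), b.\<close>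
  define tail where "tail n = map (\<lambda>i. x (n + i)) [0..<v]" for n
  define bound where
    "bound n = \<theta> a b * (f n + (\<Sum>i<m. \<rho> (x (n + i)) (x (Suc (n + i)))) + g (n + m))" for n
  have tail_steps: "(\<lambda>n. \<rho> (x (n + i)) (x (Suc (n + i)))) \<longlonglongrightarrow> 0" for i
    using LIMSEQ_ignore_initial_segment[OF steps, of i] by simp
  have "\<forall>\<^sub>F n in sequentially. x (n + i) \<noteq> c" for i c
    using eventually_sequentially_seg[where P="\<lambda>n. x n \<noteq> c"] eventually_inj_seq_ne[OF x(1)]
    by blast
  then have "\<forall>\<^sub>F n in sequentially. \<forall>i\<in>{..<v}. x (n + i) \<noteq> a \<and> x (n + i) \<noteq> b"
    by (intro eventually_ball_finite ballI eventually_conj) auto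
  moreover have "\<forall>\<^sub>F n in sequentially. \<rho> (x (n + m)) b \<le> g (n + m)"
    using g(1) eventually_sequentially_seg[where P="\<lambda>n. \<rho> (x n) b \<le> g n"] by blast
  ultimately have "\<forall>\<^sub>F n in sequentially. \<rho> a b \<le> bound n"
    using f(1)
  proof eventually_elim
    case (elim n)
    have "distinct (a # tail n @ [b])"
      using elim(1) ab(3) x(1) by (fastforce simp: tail_def distinct_map inj_on_def dest: injD)
    then have "\<rho> a b \<le> \<theta> a b * path_sum \<rho> (a # tail n @ [b])"
      using x(2) by (intro bv_metric_triangle[OF \<rho> ab(1,2)]) (auto simp: tail_def)
    also have "path_sum \<rho> (a # tail n @ [b]) =
        \<rho> a (x n) + (\<Sum>i<m. \<rho> (x (n + i)) (x (Suc (n + i)))) + \<rho> (x (n + m)) b"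
      unfolding tail_def v by (subst path_sum_Cons_map_snoc) simp
    also have "\<dots> \<le> f n + (\<Sum>i<m. \<rho> (x (n + i)) (x (Suc (n + i)))) + g (n + m)"
      using elim(2,3) by linarith
    finally show ?case
      unfolding bound_def
      using bv_metric_theta_ge_1[OF \<rho> ab(1,2)] by (simp add: mult_left_mono)
  qed
  moreover have "bound \<longlonglongrightarrow> \<theta> a b * (A + 0 + B)"
    unfolding bound_def
    using LIMSEQ_ignore_initial_segment[OF g(2), of m]
    by (intro tendsto_mult_left tendsto_add f(2) tendsto_null_sum tail_steps)
  ultimately show ?thesis
    by (simp add: tendsto_lowerbound)
qed

locale bv_kannan_map =
  fixes E :: "'a set" and \<theta> :: "'a \<Rightarrow> 'a \<Rightarrow> real" and v :: nat and \<rho> :: "'a \<Rightarrow> 'a \<Rightarrow> real"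
    and S :: "'a \<Rightarrow> 'a" and \<beta> \<gamma> :: real
  assumes metric: "bv_metric E \<theta> v \<rho>"
    and S_in: "\<And>u. u \<in> E \<Longrightarrow> S u \<in> E"
    and \<beta>_nonneg: "0 \<le> \<beta>" and \<gamma>_nonneg: "0 \<le> \<gamma>" and \<beta>_\<gamma>_less_1: "\<beta> + \<gamma> < 1"
    and kannan: "\<And>u w. u \<in> E \<Longrightarrow> w \<in> E \<Longrightarrow> \<rho> (S u) (S w) \<le> \<beta> * \<rho> u (S u) + \<gamma> * \<rho> w (S w)"
begin

definition ratio :: real where
  "ratio = \<beta> / (1 - \<gamma>)"

lemma ratio_nonneg: "0 \<le> ratio"
  and ratio_less_1: "ratio < 1"
  using \<beta>_nonneg \<gamma>_nonneg \<beta>_\<gamma>_less_1 by (auto simp: ratio_def)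

lemma fixed_point_unique:
  assumes "u \<in> E" "S u = u" "w \<in> E" "S w = w"
  shows "u = w"
proof -
  have "\<rho> u w \<le> 0"
    using kannan[of u w] assms bv_metric_eq_0_iff[OF metric assms(1) assms(1)]
      bv_metric_eq_0_iff[OF metric assms(3) assms(3)] by simp
  then show ?thesis
    using assms bv_metric_nonneg[OF metric] bv_metric_eq_0_iff[OF metric] by (meson antisym)
qed

lemma funpow_in: "u \<in> E \<Longrightarrow> (S ^^ n) u \<in> E"
  by (induction n) (auto simp: S_in)

lemma dist_step_le:
  assumes "u \<in> E"
  shows "\<rho> (S u) (S (S u)) \<le> ratio * \<rho> u (S u)"
proof -
  have "(1 - \<gamma>) * \<rho> (S u) (S (S u)) \<le> \<beta> * \<rho> u (S u)"
    using kannan[OF assms S_in[OF assms]] by (simp add: algebra_simps)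
  then show ?thesis
    using \<beta>_\<gamma>_less_1 \<beta>_nonneg by (simp add: ratio_def field_simps)
qed

lemma dist_funpow_le:
  assumes "u \<in> E"
  shows "\<rho> ((S ^^ n) u) ((S ^^ Suc n) u) \<le> ratio ^ n * \<rho> u (S u)"
proof (induction n)
  case (Suc n)
  have "\<rho> ((S ^^ Suc n) u) ((S ^^ Suc (Suc n)) u) \<le> ratio * \<rho> ((S ^^ n) u) ((S ^^ Suc n) u)"
    using dist_step_le[OF funpow_in[OF assms, of n]] by simp
  also have "\<dots> \<le> ratio * (ratio ^ n * \<rho> u (S u))"
    using Suc.IH ratio_nonneg by (rule mult_left_mono)
  finally show ?case by simp
qed simp

lemma dist_funpow_tendsto_0:
  assumes "u \<in> E"
  shows "(\<lambda>n. \<rho> ((S ^^ n) u) ((S ^^ Suc n) u)) \<longlonglongrightarrow> 0"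
proof (rule tendsto_sandwich[OF _ _ tendsto_const])
  show "(\<lambda>n. ratio ^ n * \<rho> u (S u)) \<longlonglongrightarrow> 0"
    using ratio_nonneg ratio_less_1 by (intro tendsto_mult_left_zero LIMSEQ_power_zero) auto
qed (use assms dist_funpow_le bv_metric_nonneg[OF metric] funpow_in S_in in auto)

lemma dist_funpow_Suc_le:
  assumes "u \<in> E" and "n \<le> m"
  shows "\<rho> ((S ^^ Suc n) u) ((S ^^ Suc m) u) \<le> ratio ^ n * \<rho> u (S u)"
proof -
  define d where "d = \<rho> u (S u)"
  have "0 \<le> d"
    using bv_metric_nonneg[OF metric assms(1) S_in[OF assms(1)]] by (simp add: d_def)
  have "\<rho> ((S ^^ Suc n) u) ((S ^^ Suc m) u)
      \<le> \<beta> * \<rho> ((S ^^ n) u) ((S ^^ Suc n) u) + \<gamma> * \<rho> ((S ^^ m) u) ((S ^^ Suc m) u)"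
    using kannan[OF funpow_in funpow_in, OF assms(1) assms(1), of n m] by simp
  also have "\<dots> \<le> \<beta> * (ratio ^ n * d) + \<gamma> * (ratio ^ m * d)"
    using dist_funpow_le[OF assms(1)] \<beta>_nonneg \<gamma>_nonneg
    unfolding d_def by (intro add_mono mult_left_mono) auto
  also have "\<dots> \<le> \<beta> * (ratio ^ n * d) + \<gamma> * (ratio ^ n * d)"
    using assms(2) ratio_nonneg ratio_less_1 \<open>0 \<le> d\<close> \<gamma>_nonneg
    by (intro add_left_mono mult_left_mono mult_right_mono power_decreasing) auto
  also have "\<dots> \<le> ratio ^ n * d"
    using \<beta>_\<gamma>_less_1 \<beta>_nonneg \<gamma>_nonneg ratio_nonneg \<open>0 \<le> d\<close>
    by (subst distrib_right[symmetric], intro mult_left_le_one_le) auto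
  finally show ?thesis
    unfolding d_def .
qed

lemma bv_cauchy_funpow:
  assumes "u \<in> E"
  shows "bv_cauchy \<rho> (\<lambda>n. (S ^^ n) u)"
proof (rule bv_cauchyI)
  show "\<forall>\<^sub>F n in sequentially. \<forall>m\<ge>n. \<rho> ((S ^^ n) u) ((S ^^ m) u) \<le> ratio ^ (n - 1) * \<rho> u (S u)"
    using eventually_ge_at_top[of 1]
  proof eventually_elim
    case (elim n)
    show ?case
    proof (intro allI impI)
      fix m assume "n \<le> m"
      then show "\<rho> ((S ^^ n) u) ((S ^^ m) u) \<le> ratio ^ (n - 1) * \<rho> u (S u)"
        using dist_funpow_Suc_le[OF assms, of "n - 1" "m - 1"] elim by simp
    qed
  qed
  show "(\<lambda>n. ratio ^ (n - 1) * \<rho> u (S u)) \<longlonglongrightarrow> 0"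
    using ratio_nonneg ratio_less_1
    by (subst filterlim_sequentially_Suc [symmetric]) (simp add: tendsto_mult_left_zero LIMSEQ_power_zero)
qed

lemma inj_funpow_if_no_fixed_point:
  assumes "u \<in> E" and no_fixed_point: "\<And>n. S ((S ^^ n) u) \<noteq> (S ^^ n) u"
  shows "inj (\<lambda>n. (S ^^ n) u)"
proof (rule linorder_injI)
  fix n m :: nat
  assume "n < m"
  define w where "w = (S ^^ n) u"
  define j where "j = m - n"
  have w: "w \<in> E" "S w \<noteq> w"
    using funpow_in[OF assms(1)] no_fixed_point by (auto simp: w_def)
  have "(S ^^ m) u = (S ^^ (j + n)) u"
    using \<open>n < m\<close> by (simp add: j_def)
  also have "\<dots> = (S ^^ j) w"
    by (simp add: w_def funpow_add)
  moreover have "(S ^^ j) w \<noteq> w"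
  proof
    assume periodic: "(S ^^ j) w = w"
    have "\<rho> w (S w) \<le> ratio ^ j * \<rho> w (S w)"
      using dist_funpow_le[OF w(1), of j] periodic by simp
    moreover have "ratio ^ j < 1"
      using \<open>n < m\<close> ratio_nonneg ratio_less_1 by (simp add: j_def power_less_one_iff)
    moreover have "0 < \<rho> w (S w)"
      using bv_metric_pos[OF metric w(1) S_in[OF w(1)]] w(2) by simp
    ultimately show False
      using mult_strict_right_mono[of "ratio ^ j" 1 "\<rho> w (S w)"] by linarith
  qed
  ultimately show "(S ^^ n) u \<noteq> (S ^^ m) u"
    unfolding w_def by argo
qed

lemma limit_of_orbit_is_fixed_point:
  assumes "x0 \<in> E" and inj: "inj (\<lambda>n. (S ^^ n) x0)"
    and u: "u \<in> E" and conv: "bv_converges \<rho> (\<lambda>n. (S ^^ n) x0) u"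
    and theta: "min \<beta> \<gamma> * max (\<theta> u (S u)) (\<theta> (S u) u) < 1"
  shows "S u = u"
proof (rule ccontr)
  assume "S u \<noteq> u"
  define x where "x n = (S ^^ n) x0" for n
  define r where "r = \<rho> u (S u)"
  \<comment> \<open>step 0 is a junk value (truncated subtraction); it is only used for n \<ge> 1.\<close>
  define step where "step n = \<rho> (x (n - 1)) (x n)" for n
  have x: "x n \<in> E" for n
    using funpow_in[OF assms(1)] by (simp add: x_def)
  have Su: "S u \<in> E"
    using S_in[OF u] .
  have "0 < r"
    using bv_metric_pos[OF metric u Su] \<open>S u \<noteq> u\<close> by (simp add: r_def)
  have steps: "(\<lambda>n. \<rho> (x n) (x (Suc n))) \<longlonglongrightarrow> 0"
    using dist_funpow_tendsto_0[OF assms(1)] by (simp add: x_def)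
  then have step_lim: "step \<longlonglongrightarrow> 0"
    by (subst filterlim_sequentially_Suc [symmetric]) (simp add: step_def)
  have dist_lim: "(\<lambda>n. \<rho> (x n) u) \<longlonglongrightarrow> 0"
    using conv bv_converges_iff_tendsto[of \<rho> x u] bv_metric_nonneg[OF metric x u]
    by (simp add: x_def[abs_def])
  have x_Suc: "x n = S (x (n - 1))" if "1 \<le> n" for n
    using that by (cases n) (simp_all add: x_def)
  have "r \<le> \<theta> u (S u) * (0 + \<gamma> * r)"
    unfolding r_def
  proof (rule bv_metric_triangle_limit[OF metric _ x u Su, where f="\<lambda>n. \<rho> (x n) u"
        and g="\<lambda>n. \<beta> * step n + \<gamma> * \<rho> u (S u)"])
    show "\<forall>\<^sub>F n in sequentially. \<rho> (x n) (S u) \<le> \<beta> * step n + \<gamma> * \<rho> u (S u)"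
      using eventually_ge_at_top[of 1]
      by eventually_elim (use kannan[OF x u] x_Suc in \<open>auto simp: step_def\<close>)
    show "(\<lambda>n. \<beta> * step n + \<gamma> * \<rho> u (S u)) \<longlonglongrightarrow> \<gamma> * \<rho> u (S u)"
      using tendsto_add[OF tendsto_mult_right_zero[OF step_lim] tendsto_const] by simp
  qed (use inj steps dist_lim \<open>S u \<noteq> u\<close> bv_metric_sym[OF metric u x] in \<open>auto simp: x_def\<close>)
  then have \<gamma>_bound: "1 \<le> \<gamma> * \<theta> u (S u)"
    using \<open>0 < r\<close> by (simp add: mult_le_cancel_right1 mult.commute)
  have "\<rho> (S u) u \<le> \<theta> (S u) u * (\<beta> * r + 0)"
  proof (rule bv_metric_triangle_limit[OF metric _ x Su u, where f="\<lambda>n. \<beta> * r + \<gamma> * step n"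
        and g="\<lambda>n. \<rho> (x n) u"])
    show "\<forall>\<^sub>F n in sequentially. \<rho> (S u) (x n) \<le> \<beta> * r + \<gamma> * step n"
      using eventually_ge_at_top[of 1]
      by eventually_elim (use kannan[OF u x] x_Suc in \<open>auto simp: step_def r_def\<close>)
    show "(\<lambda>n. \<beta> * r + \<gamma> * step n) \<longlonglongrightarrow> \<beta> * r"
      using tendsto_add[OF tendsto_const tendsto_mult_right_zero[OF step_lim]] by simp
  qed (use inj steps dist_lim \<open>S u \<noteq> u\<close> in \<open>auto simp: x_def\<close>)
  then have \<beta>_bound: "1 \<le> \<beta> * \<theta> (S u) u"
    using \<open>0 < r\<close> bv_metric_sym[OF metric u Su] by (simp add: r_def mult_le_cancel_right1 mult.commute)
  have "1 \<le> min \<beta> \<gamma> * max (\<theta> u (S u)) (\<theta> (S u) u)"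
  proof (cases "\<beta> \<le> \<gamma>")
    case True
    have "\<beta> * \<theta> (S u) u \<le> \<beta> * max (\<theta> u (S u)) (\<theta> (S u) u)"
      using \<beta>_nonneg by (intro mult_left_mono) auto
    with True \<beta>_bound show ?thesis by simp
  next
    case False
    have "\<gamma> * \<theta> u (S u) \<le> \<gamma> * max (\<theta> u (S u)) (\<theta> (S u) u)"
      using \<gamma>_nonneg by (intro mult_left_mono) auto
    with False \<gamma>_bound show ?thesis by simp
  qed
  with theta show False
    by linarith
qed

lemma fixed_point_exists:
  assumes complete: "bv_complete E \<rho>"
    and theta: "\<And>u. u \<in> E \<Longrightarrow> min \<beta> \<gamma> * max (\<theta> u (S u)) (\<theta> (S u) u) < 1"
  shows "\<exists>u\<in>E. S u = u"
proof -
  obtain x0 where x0: "x0 \<in> E"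
    using bv_metric_nonempty[OF metric] by blast
  show ?thesis
  proof (cases "\<exists>n. S ((S ^^ n) x0) = (S ^^ n) x0")
    case True
    then show ?thesis
      using funpow_in[OF x0] by blast
  next
    case False
    then have inj: "inj (\<lambda>n. (S ^^ n) x0)"
      using inj_funpow_if_no_fixed_point[OF x0] by blast
    obtain u where u: "u \<in> E" and conv: "bv_converges \<rho> (\<lambda>n. (S ^^ n) x0) u"
      using bv_completeD[OF complete funpow_in[OF x0] bv_cauchy_funpow[OF x0]] by blast
    have "S u = u"
      using limit_of_orbit_is_fixed_point[OF x0 inj u conv theta[OF u]] .
    with u show ?thesis
      by blast
  qed
qed

end

theorem mainTheorem12:
  fixes E :: "'a set" and \<theta> \<rho> :: "'a \<Rightarrow> 'a \<Rightarrow> real" and v :: nat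
    and S :: "'a \<Rightarrow> 'a" and \<beta> \<gamma> :: real
  assumes "bv_metric E \<theta> v \<rho>"
    and "bv_complete E \<rho>"
    and "\<forall>u\<in>E. S u \<in> E"
    and "\<beta> \<ge> 0" and "\<gamma> \<ge> 0" and "\<beta> + \<gamma> < 1"
    and "\<forall>u\<in>E. \<forall>w\<in>E. \<rho> (S u) (S w) \<le> \<beta> * \<rho> u (S u) + \<gamma> * \<rho> w (S w)"
    and "\<forall>u\<in>E. min \<beta> \<gamma> < 1 / max (\<theta> u (S u)) (\<theta> (S u) u)"
  shows "\<exists>!u. u \<in> E \<and> S u = u"
proof -
  interpret bv_kannan_map E \<theta> v \<rho> S \<beta> \<gamma>
    using assms(1,3-7) by unfold_locales blast+
  have "min \<beta> \<gamma> * max (\<theta> u (S u)) (\<theta> (S u) u) < 1" if "u \<in> E" for u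
  proof -
    have "0 < max (\<theta> u (S u)) (\<theta> (S u) u)"
      using bv_metric_theta_ge_1[OF assms(1) that S_in[OF that]] by (simp add: less_max_iff_disj)
    moreover have "min \<beta> \<gamma> < 1 / max (\<theta> u (S u)) (\<theta> (S u) u)"
      using assms(8) that by blast
    ultimately show ?thesis
      by (subst (asm) pos_less_divide_eq)
  qed
  then obtain u where u: "u \<in> E" "S u = u"
    using fixed_point_exists[OF assms(2)] by blast
  show ?thesis
  proof (rule ex1I[of _ u])
    show "u \<in> E \<and> S u = u"
      using u by blast
    show "w = u" if "w \<in> E \<and> S w = w" for w
      using fixed_point_unique[OF u] that by blast
  qed
qed

end
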